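(* Let $\Bbbk$ be a field with $\mathrm{char}(\Bbbk)\ne2$, $n\ge2$, $\mathbb{H}_{2^n}$ the Nichols Hopf algebra and $A$ a unital associative $\Bbbk$-algebra. Let $\rho:A\to A\otimes\mathbb{H}_{2^n}$ be a linear map, written $\rho(a)=a^0\otimes a^1$, such that $A_1:=(1^*-g^* )(1^1)1^0=0$ and $w_i:=(x_i^*-(gx_i)^* )(1^1)1^0\in Z(A)$ for all $i\in\{1,\dots,n-1\}$. Then $\rho$ is a partial coaction of $\mathbb{H}_{2^n}$ on $A$ if and only if $$\rho(a)=a\otimes\frac{1+g}{2}-\sum_{i=1}^{n-1}w_ia\otimes gx_i\quad\text{for all }a\in A.$$ Moreover, all these partial coactions are symmetric.
   Context: $\mathbb{H}_{2^n}$ is the Hopf algebra generated by $g,x_1,\dots,x_{n-1}$ with relations $g^2=1$, $x_i^2=0$, $x_ig=-gx_i$, $x_ix_j=-x_jx_i$, basis $\{g^{j_0}x_1^{j_1}\cdots x_{n-1}^{j_{n-1}}:j_i\in\{0,1\}\}$, $g$ group-like, $\Delta(x_i)=x_i\otimes1+g\otimes x_i$, $\varepsilon(x_i)=0$. For a basis element $b$, $b^*$ denotes the corresponding element of the dual basis. $Z(A)$ is the center of $A$. For a bialgebra $H$, a partial coaction of $H$ on $A$ is a linear map $\rho:A\to A\otimes H$ such that $(I\otimes\varepsilon)\rho(a)=a$, $\rho(ab)=\rho(a)\rho(b)$ and $(\rho\otimes I)\rho(a)=(\rho(1_A)\otimes1_H)((I\otimes\Delta)\rho(a))$ for all $a,b\in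 A$; it is symmetric if moreover $(\rho\otimes I)\rho(a)=((I\otimes\Delta)\rho(a))(\rho(1_A)\otimes1_H)$ for all $a$. *)

theory Defs
  imports Main
begin

text \<open>Basis of the Nichols Hopf algebra H_{2^n}: the index (a, S) with a :: bool and
  S a subset of {1..<n} stands for g^a x_{s1} x_{s2} ... x_{sk}, where s1 < ... < sk
  enumerate S.  Elements of H are functions Idx n -> k (coordinates in this basis),
  elements of A (tensor) H are functions Idx n -> A (the element sum_b t(b) (tensor) b),
  elements of A (tensor) H (tensor) H are functions Idx n x Idx n -> A.\<close>

type_synonym hidx = "bool \<times> nat set"

definition Idx :: "nat \<Rightarrow> hidx set" where
  "Idx n = UNIV \<times> Pow {1..<n}"

text \<open>Structure constants of the multiplication: coefficient of the basis element e
  in the product of basis elements (a,S) and (b,T), using g^2=1, x_i g = - g x_i,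
  x_i x_j = - x_j x_i, x_i^2 = 0.\<close>
definition bmul :: "hidx \<Rightarrow> hidx \<Rightarrow> hidx \<Rightarrow> 'k::field" where
  "bmul bs dt e = (case bs of (a, S) \<Rightarrow> case dt of (b, T) \<Rightarrow>
     (if S \<inter> T = {} \<and> e = (a \<noteq> b, S \<union> T)
      then (- 1) ^ (if b then card S else 0)
           * (- 1) ^ card {(s, t). s \<in> S \<and> t \<in> T \<and> t < s}
      else 0))"

definition hhmul :: "nat \<Rightarrow> (hidx \<times> hidx \<Rightarrow> 'k::field) \<Rightarrow> (hidx \<times> hidx \<Rightarrow> 'k)
    \<Rightarrow> hidx \<times> hidx \<Rightarrow> 'k" where
  "hhmul n u v = (\<lambda>(e1, e2). \<Sum>b1\<in>Idx n. \<Sum>b2\<in>Idx n. \<Sum>d1\<in>Idx n. \<Sum>d2\<in>Idx n.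
      bmul b1 d1 e1 * bmul b2 d2 e2 * u (b1, b2) * v (d1, d2))"

definition delta_g :: "bool \<Rightarrow> hidx \<times> hidx \<Rightarrow> 'k::field" where
  "delta_g a = (\<lambda>p. if p = ((a, {}), (a, {})) then 1 else 0)"

definition delta_x :: "nat \<Rightarrow> hidx \<times> hidx \<Rightarrow> 'k::field" where
  "delta_x i = (\<lambda>p. (if p = ((False, {i}), (False, {})) then 1 else 0)
                  + (if p = ((True, {}), (False, {i})) then 1 else 0))"

text \<open>Comultiplication of a basis element, extended multiplicatively from the generators:
  coefficient of c (tensor) d in Delta(b).\<close>
definition Dl :: "nat \<Rightarrow> hidx \<Rightarrow> hidx \<Rightarrow> hidx \<Rightarrow> 'k::field" where
  "Dl n b c d = foldl (\<lambda>acc i. hhmul n acc (delta_x i)) (delta_g (fst b))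
                   (sorted_list_of_set (snd b)) (c, d)"

definition heps :: "hidx \<Rightarrow> 'k::field" where
  "heps b = (if snd b = {} then 1 else 0)"

text \<open>A unital associative k-algebra: a ring A with a unital ring homomorphism
  iota : k -> Z(A); scalar multiplication is c . a = iota c * a.\<close>
definition kalg :: "('k::field \<Rightarrow> 'a::ring_1) \<Rightarrow> bool" where
  "kalg \<iota> \<longleftrightarrow> \<iota> 1 = 1 \<and> (\<forall>x y. \<iota> (x + y) = \<iota> x + \<iota> y) \<and> (\<forall>x y. \<iota> (x * y) = \<iota> x * \<iota> y)
      \<and> (\<forall>x a. \<iota> x * a = a * \<iota> x)"

definition klinear :: "('k::field \<Rightarrow> 'a::ring_1) \<Rightarrow> ('a \<Rightarrow> hidx \<Rightarrow> 'a) \<Rightarrow> bool" where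
  "klinear \<iota> \<rho> \<longleftrightarrow> (\<forall>a b. \<rho> (a + b) = (\<lambda>e. \<rho> a e + \<rho> b e))
      \<and> (\<forall>c a. \<rho> (\<iota> c * a) = (\<lambda>e. \<iota> c * \<rho> a e))"

definition tens :: "'a::zero \<Rightarrow> hidx \<Rightarrow> hidx \<Rightarrow> 'a" where
  "tens a b = (\<lambda>c. if c = b then a else 0)"

definition tmul :: "nat \<Rightarrow> ('k::field \<Rightarrow> 'a::ring_1) \<Rightarrow> (hidx \<Rightarrow> 'a) \<Rightarrow> (hidx \<Rightarrow> 'a)
    \<Rightarrow> hidx \<Rightarrow> 'a" where
  "tmul n \<iota> t u = (\<lambda>e. \<Sum>b\<in>Idx n. \<Sum>d\<in>Idx n. \<iota> (bmul b d e) * t b * u d)"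

definition ttmul :: "nat \<Rightarrow> ('k::field \<Rightarrow> 'a::ring_1) \<Rightarrow> (hidx \<times> hidx \<Rightarrow> 'a)
    \<Rightarrow> (hidx \<times> hidx \<Rightarrow> 'a) \<Rightarrow> hidx \<times> hidx \<Rightarrow> 'a" where
  "ttmul n \<iota> t u = (\<lambda>(e1, e2). \<Sum>b1\<in>Idx n. \<Sum>b2\<in>Idx n. \<Sum>d1\<in>Idx n. \<Sum>d2\<in>Idx n.
      \<iota> (bmul b1 d1 e1 * bmul b2 d2 e2) * t (b1, b2) * u (d1, d2))"

definition rho_rho :: "nat \<Rightarrow> ('a \<Rightarrow> hidx \<Rightarrow> 'a) \<Rightarrow> 'a \<Rightarrow> hidx \<times> hidx \<Rightarrow> 'a::ring_1" where
  "rho_rho n \<rho> a = (\<lambda>(c, b). if b \<in> Idx n then \<rho> (\<rho> a b) c else 0)"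

definition id_delta :: "nat \<Rightarrow> ('k::field \<Rightarrow> 'a::ring_1) \<Rightarrow> (hidx \<Rightarrow> 'a) \<Rightarrow> hidx \<times> hidx \<Rightarrow> 'a" where
  "id_delta n \<iota> t = (\<lambda>(c, d). \<Sum>b\<in>Idx n. \<iota> (Dl n b c d) * t b)"

definition tens_one :: "(hidx \<Rightarrow> 'a::zero) \<Rightarrow> hidx \<times> hidx \<Rightarrow> 'a" where
  "tens_one t = (\<lambda>(c, b). if b = (False, {}) then t c else 0)"

definition partial_coaction :: "nat \<Rightarrow> ('k::field \<Rightarrow> 'a::ring_1) \<Rightarrow> ('a \<Rightarrow> hidx \<Rightarrow> 'a) \<Rightarrow> bool" where
  "partial_coaction n \<iota> \<rho> \<longleftrightarrow>
     (\<forall>a. (\<Sum>b\<in>Idx n. \<iota> (heps b) * \<rho> a b) = a)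
   \<and> (\<forall>a b. \<rho> (a * b) = tmul n \<iota> (\<rho> a) (\<rho> b))
   \<and> (\<forall>a. rho_rho n \<rho> a = ttmul n \<iota> (tens_one (\<rho> 1)) (id_delta n \<iota> (\<rho> a)))"

definition symmetric_partial_coaction :: "nat \<Rightarrow> ('k::field \<Rightarrow> 'a::ring_1) \<Rightarrow> ('a \<Rightarrow> hidx \<Rightarrow> 'a) \<Rightarrow> bool" where
  "symmetric_partial_coaction n \<iota> \<rho> \<longleftrightarrow> partial_coaction n \<iota> \<rho>
   \<and> (\<forall>a. rho_rho n \<rho> a = ttmul n \<iota> (id_delta n \<iota> (\<rho> a)) (tens_one (\<rho> 1)))"

definition wcoef :: "('a \<Rightarrow> hidx \<Rightarrow> 'a::ring_1) \<Rightarrow> nat \<Rightarrow> 'a" where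
  "wcoef \<rho> i = \<rho> 1 (False, {i}) - \<rho> 1 (True, {i})"

end

theory Submission
  imports Defs
begin

text \<open>Multiplying by \<open>\<rho>(1)\<close> on either side forces the coordinates of \<open>\<rho>(a)\<close> at
  \<open>1\<close> and \<open>g\<close> to be \<open>a/2\<close>, the one at \<open>x\<^sub>i\<close> to vanish and the one at
  \<open>g x\<^sub>i\<close> to be \<open>-w\<^sub>i a\<close>. Coassociativity, read on the slice of
  \<open>(I \<otimes> \<Delta>) \<rho>(a)\<close> at \<open>g\<^sup>p x\<^sub>j\<close>, then expresses the coordinate of \<open>\<rho>(a)\<close> at
  \<open>g\<^sup>p x\<^sub>j x\<^sub>S\<close> through products of coordinates of lower degree, so by induction all
  coordinates of degree at least two vanish. Conversely, for \<open>\<rho>\<close> of this form all products stay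
  in degree at most one, because the terms \<open>g x\<^sub>i \<cdot> g x\<^sub>j\<close> and \<open>g x\<^sub>j \<cdot> g x\<^sub>i\<close>
  cancel when the \<open>w\<^sub>i\<close> are central; the axioms reduce to identities between coordinates,
  and coassociativity holds with \<open>\<rho>(1)\<close> on either side, which is symmetry.\<close>

lemma finite_Idx [simp]: "finite (Idx n)"
  unfolding Idx_def by simp

lemma subset_Idx: "S \<subseteq> {1..<n} \<Longrightarrow> (p, S) \<in> Idx n"
  by (simp add: Idx_def)

lemma sum_eq_single:
  assumes "finite I" "\<And>d. d \<in> I \<Longrightarrow> d \<noteq> d0 \<Longrightarrow> f d = 0"
  shows "sum f I = (if d0 \<in> I then f d0 else 0)"
proof -
  have "sum f I = sum (\<lambda>d. if d = d0 then f d else 0) I"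
    by (rule sum.cong) (use assms in auto)
  then show ?thesis
    using assms(1) by (simp add: sum.delta)
qed

lemma sum_sum_delta:
  assumes "finite I" "finite J" "x \<in> I" "y \<in> J"
  shows "(\<Sum>a\<in>I. \<Sum>b\<in>J. if a = x \<and> b = y then f a b else 0) = f x y"
proof -
  have "(\<Sum>a\<in>I. \<Sum>b\<in>J. if a = x \<and> b = y then f a b else 0) = (\<Sum>a\<in>I. if a = x then f a y else 0)"
    by (rule sum.cong) (use assms in \<open>auto simp: sum_eq_single[of J y]\<close>)
  also have "\<dots> = f x y"
    using assms by (simp add: sum.delta)
  finally show ?thesis .
qed

lemma central_left_commute:
  fixes x y z :: "'a::ring_1"
  assumes "\<And>c. c * z = z * c"
  shows "x * (z * y) = z * (x * y)"
proof -
  have "x * (z * y) = (x * z) * y" by (simp only: mult.assoc)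
  also have "\<dots> = z * (x * y)" by (simp only: assms mult.assoc)
  finally show ?thesis .
qed

lemma kalg_one: "kalg \<iota> \<Longrightarrow> \<iota> 1 = 1"
  and kalg_add: "kalg \<iota> \<Longrightarrow> \<iota> (x + y) = \<iota> x + \<iota> y"
  and kalg_mult: "kalg \<iota> \<Longrightarrow> \<iota> (x * y) = \<iota> x * \<iota> y"
  and kalg_central: "kalg \<iota> \<Longrightarrow> \<iota> x * a = a * \<iota> x"
  unfolding kalg_def by blast+

lemma kalg_zero: "kalg \<iota> \<Longrightarrow> \<iota> 0 = 0"
  using kalg_add[of \<iota> 0 0] by simp

lemma kalg_minus: "kalg \<iota> \<Longrightarrow> \<iota> (- x) = - \<iota> x"
proof -
  assume alg: "kalg \<iota>"
  have "\<iota> x + \<iota> (- x) = 0"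
    using kalg_add[OF alg, of x "- x"] kalg_zero[OF alg] by simp
  then show ?thesis by (simp add: minus_unique)
qed

lemma kalg_minus_one_power: "kalg \<iota> \<Longrightarrow> \<iota> ((- 1) ^ k) = (- 1) ^ k"
  by (induction k) (simp_all add: kalg_one kalg_mult kalg_minus del: power_minus1_even)

locale half_algebra =
  fixes \<iota> :: "'k::field \<Rightarrow> 'a::ring_1"
  assumes alg: "kalg \<iota>" and two_nonzero: "(2::'k) \<noteq> 0"
begin

abbreviation half :: 'a where "half \<equiv> \<iota> (1/2)"

lemma half_central: "c * half = half * c"
  by (rule kalg_central[OF alg, symmetric])

lemma half_left_commute: "x * (half * y) = half * (x * y)"
  by (rule central_left_commute[OF half_central])

lemma half_add_half: "half + half = 1"
  using kalg_add[OF alg, of "1/2" "1/2"] kalg_one[OF alg] two_nonzero by simp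

lemma half_double: "half * x + half * x = (x::'a)"
  by (simp flip: distrib_right add: half_add_half)

lemma half_mult_eq_0_iff: "half * x = 0 \<longleftrightarrow> x = 0"
  using half_double[of x] by auto

lemma double_eq_0_iff: "x + x = 0 \<longleftrightarrow> (x::'a) = 0"
proof
  assume "x + x = 0"
  then show "x = 0"
    using half_double[of x] by (simp flip: distrib_left)
qed simp

end

lemma bmul_one_right: "bmul b (False, {}) e = (if e = b then 1 else 0)"
  by (cases b) (auto simp: bmul_def)

lemma bmul_one_left: "bmul (False, {}) b e = (if e = b then 1 else 0)"
  by (cases b) (auto simp: bmul_def)

lemma bmul_g_left: "bmul (True, {}) (b, T) e = (if e = (\<not> b, T) then 1 else 0)"
  by (auto simp: bmul_def)

lemma bmul_g_right: "bmul (a, S) (True, {}) e = (if e = (\<not> a, S) then (- 1) ^ card S else 0)"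
  by (auto simp: bmul_def)

lemma bmul_nonzeroD:
  assumes "bmul (q, R) (r, S) (p, B) \<noteq> (0::'k::field)"
  shows "R \<inter> S = {} \<and> p = (q \<noteq> r) \<and> B = R \<union> S"
  using assms by (auto simp: bmul_def split: if_splits)

lemma bmul_gx_anticommute:
  assumes "i \<noteq> j"
  shows "bmul (True, {i}) (True, {j}) e = - (bmul (True, {j}) (True, {i}) e :: 'k::field)"
proof (cases "i < j")
  case True
  have inv: "{(s, t). s = i \<and> t = j \<and> t < s} = {}" "{(s, t). s = j \<and> t = i \<and> t < s} = {(j, i)}"
    using True by auto
  show ?thesis using assms by (simp add: bmul_def inv insert_commute)
next
  case False
  have inv: "{(s, t). s = i \<and> t = j \<and> t < s} = {(i, j)}" "{(s, t). s = j \<and> t = i \<and> t < s} = {}"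
    using False assms by auto
  show ?thesis using assms by (simp add: bmul_def inv insert_commute)
qed

lemma tmul_eq_sum_Pow:
  fixes \<iota> :: "'k::field \<Rightarrow> 'a::ring_1"
  assumes alg: "kalg \<iota>" and B: "B \<subseteq> {1..<n}"
  shows "tmul n \<iota> t u (p, B) = (\<Sum>R\<in>Pow B. \<Sum>q\<in>UNIV.
           \<iota> (bmul (q, R) (q \<noteq> p, B - R) (p, B)) * t (q, R) * u (q \<noteq> p, B - R))"
proof -
  define g where "g b = \<iota> (bmul b (fst b \<noteq> p, B - snd b) (p, B)) * t b * u (fst b \<noteq> p, B - snd b)" for b
  have inner: "(\<Sum>d\<in>Idx n. \<iota> (bmul b d (p, B)) * t b * u d) = g b" for b
  proof -
    obtain q R where b: "b = (q, R)" by fastforce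
    have "(\<Sum>d\<in>Idx n. \<iota> (bmul b d (p, B)) * t b * u d)
        = (if (q \<noteq> p, B - R) \<in> Idx n
            then \<iota> (bmul b (q \<noteq> p, B - R) (p, B)) * t b * u (q \<noteq> p, B - R) else 0)"
    proof (rule sum_eq_single)
      fix d assume "d \<noteq> (q \<noteq> p, B - R)"
      then have "bmul (q, R) d (p, B) = (0::'k)"
        by (cases d) (auto dest: bmul_nonzeroD)
      then show "\<iota> (bmul b d (p, B)) * t b * u d = 0"
        using b kalg_zero[OF alg] by simp
    qed simp
    also have "\<dots> = g b"
      using B by (auto simp: Idx_def g_def b)
    finally show ?thesis .
  qed
  have "tmul n \<iota> t u (p, B) = (\<Sum>b\<in>Idx n. g b)"
    unfolding tmul_def using inner by simp
  also have "\<dots> = (\<Sum>b\<in>UNIV \<times> Pow B. g b)"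
  proof (rule sum.mono_neutral_right)
    show "UNIV \<times> Pow B \<subseteq> Idx n"
      using B by (auto simp: Idx_def)
    show "\<forall>b\<in>Idx n - UNIV \<times> Pow B. g b = 0"
    proof
      fix b assume "b \<in> Idx n - UNIV \<times> Pow B"
      then have "bmul b (fst b \<noteq> p, B - snd b) (p, B) = (0::'k)"
        by (cases b) (auto simp: bmul_def)
      then show "g b = 0"
        using kalg_zero[OF alg] by (simp add: g_def)
    qed
  qed simp
  also have "\<dots> = (\<Sum>q\<in>UNIV. \<Sum>R\<in>Pow B. g (q, R))"
    by (simp add: sum.cartesian_product)
  also have "\<dots> = (\<Sum>R\<in>Pow B. \<Sum>q\<in>UNIV. g (q, R))"
    by (rule sum.swap)
  finally show ?thesis by (simp add: g_def)
qed

lemma tmul_outside: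
  fixes \<iota> :: "'k::field \<Rightarrow> 'a::ring_1"
  assumes alg: "kalg \<iota>" and B: "\<not> B \<subseteq> {1..<n}"
  shows "tmul n \<iota> t u (p, B) = 0"
proof -
  have "bmul b d (p, B) = (0::'k)" if "b \<in> Idx n" "d \<in> Idx n" for b d
    using that B by (cases b, cases d) (auto simp: Idx_def dest!: bmul_nonzeroD)
  then show ?thesis
    unfolding tmul_def using kalg_zero[OF alg] by simp
qed

subsection \<open>Comultiplication\<close>

lemma hhmul_delta_x:
  assumes i: "i \<in> {1..<n}"
  shows "hhmul n acc (delta_x i) (c, d) =
      (\<Sum>b1\<in>Idx n. bmul b1 (False, {i}) c * (\<Sum>b2\<in>Idx n. bmul b2 (False, {}) d * acc (b1, b2)))
    + (\<Sum>b1\<in>Idx n. bmul b1 (True, {}) c * (\<Sum>b2\<in>Idx n. bmul b2 (False, {i}) d * acc (b1, b2)))"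
proof -
  have in_Idx: "(False, {i}) \<in> Idx n" "(False, {}) \<in> Idx n" "(True, {}) \<in> Idx n"
    using i by (auto simp: Idx_def)
  have inner: "(\<Sum>d1\<in>Idx n. \<Sum>d2\<in>Idx n. bmul b1 d1 c * bmul b2 d2 d * acc (b1, b2) * delta_x i (d1, d2))
      = bmul b1 (False, {i}) c * bmul b2 (False, {}) d * acc (b1, b2)
        + bmul b1 (True, {}) c * bmul b2 (False, {i}) d * acc (b1, b2)" for b1 b2
  proof -
    let ?F = "\<lambda>d1 d2. bmul b1 d1 c * bmul b2 d2 d * acc (b1, b2)"
    have "(\<Sum>d1\<in>Idx n. \<Sum>d2\<in>Idx n. ?F d1 d2 * delta_x i (d1, d2))
        = (\<Sum>d1\<in>Idx n. \<Sum>d2\<in>Idx n. if d1 = (False, {i}) \<and> d2 = (False, {}) then ?F d1 d2 else 0)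
        + (\<Sum>d1\<in>Idx n. \<Sum>d2\<in>Idx n. if d1 = (True, {}) \<and> d2 = (False, {i}) then ?F d1 d2 else 0)"
      by (simp only: sum.distrib[symmetric]) (intro sum.cong refl, simp add: delta_x_def)
    also have "\<dots> = ?F (False, {i}) (False, {}) + ?F (True, {}) (False, {i})"
      using in_Idx by (simp add: sum_sum_delta)
    finally show ?thesis .
  qed
  have "hhmul n acc (delta_x i) (c, d) = (\<Sum>b1\<in>Idx n. \<Sum>b2\<in>Idx n.
      bmul b1 (False, {i}) c * bmul b2 (False, {}) d * acc (b1, b2)
      + bmul b1 (True, {}) c * bmul b2 (False, {i}) d * acc (b1, b2))"
    unfolding hhmul_def by (simp only: case_prod_conv inner)
  then show ?thesis
    by (simp add: sum.distrib sum_distrib_left mult.assoc)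
qed

lemma hhmul_delta_x_deg0:
  fixes acc :: "hidx \<times> hidx \<Rightarrow> 'k::field"
  assumes i: "i \<in> {1..<n}"
  shows "hhmul n acc (delta_x i) (c, (t, {})) = (\<Sum>b\<in>Idx n. bmul b (False, {i}) c * acc (b, (t, {})))"
proof -
  have "bmul b2 (False, {i}) (t, {}) = (0::'k)" for b2
    by (cases b2) (auto simp: bmul_def)
  moreover have "(\<Sum>b2\<in>Idx n. bmul b2 (False, {}) (t, {}) * acc (b1, b2)) = acc (b1, (t, {}))" for b1
    by (subst sum_eq_single[of _ "(t, {})"]) (auto simp: bmul_one_right Idx_def)
  ultimately show ?thesis
    using i by (simp add: hhmul_delta_x)
qed

lemma hhmul_delta_x_deg1:
  fixes acc :: "hidx \<times> hidx \<Rightarrow> 'k::field"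
  assumes i: "i \<in> {1..<n}" and j: "j \<in> {1..<n}"
  shows "hhmul n acc (delta_x i) (c, (t, {j})) = (\<Sum>b\<in>Idx n. bmul b (False, {i}) c * acc (b, (t, {j})))
      + (if j = i then \<Sum>b\<in>Idx n. bmul b (True, {}) c * acc (b, (t, {})) else 0)"
proof -
  have "(\<Sum>b2\<in>Idx n. bmul b2 (False, {}) (t, {j}) * acc (b1, b2)) = acc (b1, (t, {j}))" for b1
    using j by (subst sum_eq_single[of _ "(t, {j})"]) (auto simp: bmul_one_right Idx_def)
  moreover have "(\<Sum>b2\<in>Idx n. bmul b2 (False, {i}) (t, {j}) * acc (b1, b2))
      = (if j = i then acc (b1, (t, {})) else 0)" for b1
  proof (subst sum_eq_single[of _ "(t, {})"])
    fix b2 :: hidx assume "b2 \<noteq> (t, {})"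
    then show "bmul b2 (False, {i}) (t, {j}) * acc (b1, b2) = 0"
      by (cases b2) (auto simp: bmul_def)
  qed (auto simp: bmul_def Idx_def)
  ultimately show ?thesis
    using i by (simp add: hhmul_delta_x sum_distrib_left)
qed

lemma sum_Idx_mult_if_eq:
  assumes "b0 \<in> Idx n"
  shows "(\<Sum>b\<in>Idx n. f b * (if b = b0 \<and> P then v else 0)) = (if P then f b0 * v else (0::'k::field))"
  using assms by (subst sum_eq_single[of _ b0]) auto

definition comult_word :: "nat \<Rightarrow> bool \<Rightarrow> nat list \<Rightarrow> hidx \<times> hidx \<Rightarrow> 'k::field" where
  "comult_word n s L = foldl (\<lambda>acc i. hhmul n acc (delta_x i)) (delta_g s) L"

lemma comult_word_snoc: "comult_word n s (L @ [x]) = hhmul n (comult_word n s L) (delta_x x)"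
  by (simp add: comult_word_def)

lemma Dl_eq_comult_word: "Dl n b c d = comult_word n (fst b) (sorted_list_of_set (snd b)) (c, d)"
  by (simp add: Dl_def comult_word_def)

lemma bmul_x_right_of_smaller:
  assumes "\<forall>l\<in>A. l < x"
  shows "bmul (r, A) (False, {x}) c = (if c = (r, insert x A) then 1 else (0::'k::field))"
proof -
  have no_inversions: "{(a, b). a \<in> A \<and> b = x \<and> b < a} = {}"
    using assms by auto
  have "A \<inter> {x} = {}"
    using assms by auto
  then show ?thesis by (simp add: bmul_def no_inversions)
qed

lemma sorted_snoc_less:
  assumes "sorted (L @ [x])" "distinct (L @ [x])"
  shows "\<forall>l\<in>set L. l < x"
  using assms by (auto simp: sorted_append order.strict_iff_order)

lemma comult_word_deg0:
  fixes c :: hidx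
  assumes "sorted L" "distinct L" "set L \<subseteq> {1..<n}"
  shows "comult_word n s L (c, (t, {})) = (if c = (s, set L) \<and> t = s then 1 else (0::'k::field))"
  using assms
proof (induction L arbitrary: c t rule: rev_induct)
  case Nil
  then show ?case by (auto simp: comult_word_def delta_g_def)
next
  case (snoc x L)
  have L: "sorted L" "distinct L" "set L \<subseteq> {1..<n}" and x: "x \<in> {1..<n}"
    using snoc.prems by (auto simp: sorted_append)
  have "comult_word n s (L @ [x]) (c, (t, {}))
      = (\<Sum>b\<in>Idx n. bmul b (False, {x}) c * (if b = (s, set L) \<and> t = s then 1 else 0) :: 'k)"
    using x by (simp add: comult_word_snoc hhmul_delta_x_deg0 snoc.IH[OF L])
  also have "\<dots> = (if t = s then bmul (s, set L) (False, {x}) c else 0)"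
    using L by (simp add: sum_Idx_mult_if_eq subset_Idx)
  also have "\<dots> = (if c = (s, set (L @ [x])) \<and> t = s then 1 else 0)"
    using bmul_x_right_of_smaller[OF sorted_snoc_less[OF snoc.prems(1,2)], of s c] by auto
  finally show ?case .
qed

text \<open>The terms of \<open>\<Delta>(g\<^sup>s x\<^sub>L)\<close> with right factor \<open>x\<^sub>j\<close> take \<open>g \<otimes> x\<^sub>j\<close> from
  the factor \<open>\<Delta>(x\<^sub>j)\<close> and \<open>x\<^sub>k \<otimes> 1\<close> from the others; moving that \<open>g\<close> to the
  front past the \<open>x\<^sub>k\<close> with \<open>k < j\<close> gives the sign.\<close>
lemma comult_word_deg1:
  fixes c :: hidx
  assumes "sorted L" "distinct L" "set L \<subseteq> {1..<n}" and j: "j \<in> {1..<n}"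
  shows "comult_word n s L (c, (t, {j})) =
    (if c = (\<not> s, set L - {j}) \<and> t = s \<and> j \<in> set L then (- 1) ^ card {k\<in>set L. k < j} else (0::'k::field))"
  using assms(1-3)
proof (induction L arbitrary: c t rule: rev_induct)
  case Nil
  then show ?case by (auto simp: comult_word_def delta_g_def)
next
  case (snoc x L)
  have L: "sorted L" "distinct L" "set L \<subseteq> {1..<n}" and x: "x \<in> {1..<n}" and xL: "x \<notin> set L"
    using snoc.prems by (auto simp: sorted_append)
  have less: "\<forall>l\<in>set L. l < x"
    using sorted_snoc_less[OF snoc.prems(1,2)] .
  have in_Idx: "(\<not> s, set L - {j}) \<in> Idx n" "(s, set L) \<in> Idx n"
    using L by (auto simp: Idx_def)
  have "comult_word n s (L @ [x]) (c, (t, {j}))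
    = (\<Sum>b\<in>Idx n. bmul b (False, {x}) c *
          (if b = (\<not> s, set L - {j}) \<and> t = s \<and> j \<in> set L then (- 1) ^ card {k\<in>set L. k < j} else 0))
      + (if j = x then \<Sum>b\<in>Idx n. bmul b (True, {}) c * (if b = (s, set L) \<and> t = s then 1 else 0) else 0 :: 'k)"
    using x j by (simp add: comult_word_snoc hhmul_delta_x_deg1 snoc.IH[OF L] comult_word_deg0[OF L])
  also have "\<dots> = (if t = s \<and> j \<in> set L
        then bmul (\<not> s, set L - {j}) (False, {x}) c * (- 1) ^ card {k\<in>set L. k < j} else 0)
      + (if j = x \<and> t = s then bmul (s, set L) (True, {}) c else 0)"
    unfolding sum_Idx_mult_if_eq[OF in_Idx(1)] sum_Idx_mult_if_eq[OF in_Idx(2)] by simp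
  also have "\<dots> = (if c = (\<not> s, set (L @ [x]) - {j}) \<and> t = s \<and> j \<in> set (L @ [x])
      then (- 1) ^ card {k\<in>set (L @ [x]). k < j} else 0)"
  proof (cases "j = x")
    case True
    have "set (L @ [x]) - {j} = set L" "{k\<in>set (L @ [x]). k < j} = set L"
      using True xL less by auto
    then show ?thesis using True xL by (simp add: bmul_g_right)
  next
    case False
    have "insert x (set L - {j}) = set (L @ [x]) - {j}"
      using False by auto
    then have bx: "bmul (\<not> s, set L - {j}) (False, {x}) e
        = (if e = (\<not> s, set (L @ [x]) - {j}) then 1 else (0::'k))" for e
      using less bmul_x_right_of_smaller[of "set L - {j}" x "\<not> s" e] by simp
    show ?thesis
    proof (cases "j \<in> set L")
      case True
      have smaller: "{k\<in>set (L @ [x]). k < j} = {k\<in>set L. k < j}"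
        using True less by auto
      show ?thesis
        unfolding smaller using False True by (simp add: bx)
    qed (use False in simp)
  qed
  finally show ?case .
qed

lemma Dl_deg0:
  assumes "b \<in> Idx n"
  shows "Dl n b c (t, {}) = (if c = b \<and> t = fst b then 1 else (0::'k::field))"
proof -
  have S: "snd b \<subseteq> {1..<n}"
    using assms by (auto simp: Idx_def)
  then have "finite (snd b)"
    by (rule finite_subset) simp
  with S show ?thesis
    by (simp add: Dl_eq_comult_word comult_word_deg0)
qed

lemma Dl_deg1:
  assumes "b \<in> Idx n" and j: "j \<in> {1..<n}"
  shows "Dl n b c (t, {j}) = (if c = (\<not> fst b, snd b - {j}) \<and> t = fst b \<and> j \<in> snd b
      then (- 1) ^ card {k\<in>snd b. k < j} else (0::'k::field))"
proof -
  have S: "snd b \<subseteq> {1..<n}"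
    using assms by (auto simp: Idx_def)
  then have "finite (snd b)"
    by (rule finite_subset) simp
  with S show ?thesis
    by (simp add: Dl_eq_comult_word comult_word_deg1[OF _ _ _ j])
qed

lemma Dl_deg0_high: "B \<noteq> {} \<Longrightarrow> Dl n (s, {}) c (p, B) = (0::'k::field)"
  by (simp add: Dl_def delta_g_def)

lemma Dl_gx_high:
  assumes i: "i \<in> {1..<n}" and B: "B \<noteq> {}" "B \<noteq> {i}"
  shows "Dl n (True, {i}) c (p, B) = (0::'k::field)"
proof -
  have "(\<Sum>b2\<in>Idx n. bmul b2 (False, {}) (p, B) * (delta_g True (b1, b2) :: 'k)) = 0" for b1
    by (intro sum.neutral) (auto simp: delta_g_def bmul_one_right B)
  moreover have "(\<Sum>b2\<in>Idx n. bmul b2 (False, {i}) (p, B) * (delta_g True (b1, b2) :: 'k)) = 0" for b1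
    by (intro sum.neutral) (auto simp: delta_g_def bmul_g_left B)
  ultimately show ?thesis
    using i by (simp add: Dl_def hhmul_delta_x)
qed

lemma id_delta_deg0:
  fixes \<iota> :: "'k::field \<Rightarrow> 'a::ring_1"
  assumes alg: "kalg \<iota>"
  shows "id_delta n \<iota> t (c, (p, {})) = (if c \<in> Idx n \<and> fst c = p then t c else 0)"
proof -
  have "id_delta n \<iota> t (c, (p, {})) = (\<Sum>b\<in>Idx n. if b = c then (if fst c = p then t b else 0) else 0)"
    unfolding id_delta_def prod.case
    by (intro sum.cong refl) (auto simp: Dl_deg0 kalg_zero[OF alg] kalg_one[OF alg])
  then show ?thesis
    by simp
qed

lemma id_delta_deg1:
  fixes \<iota> :: "'k::field \<Rightarrow> 'a::ring_1"
  assumes alg: "kalg \<iota>" and j: "j \<in> {1..<n}"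
  shows "id_delta n \<iota> t ((r, S), (p, {j})) = (if r = (\<not> p) \<and> j \<notin> S \<and> S \<subseteq> {1..<n}
      then \<iota> ((- 1) ^ card {k\<in>S. k < j}) * t (p, insert j S) else 0)"
proof -
  have summand: "\<iota> (Dl n b (r, S) (p, {j})) * t b = (if b = (p, insert j S)
      then (if r = (\<not> p) \<and> j \<notin> S then \<iota> ((- 1) ^ card {k\<in>S. k < j}) * t b else 0) else 0)"
    if b: "b \<in> Idx n" for b
  proof (cases "b = (p, insert j S) \<and> j \<notin> S")
    case True
    then have b_eq: "b = (p, insert j S)" and "j \<notin> S"
      by auto
    have smaller: "{k\<in>insert j S. k < j} = {k\<in>S. k < j}"
      by auto
    have Dl_b: "Dl n (p, insert j S) (r', S) (p, {j}) = (if r' = (\<not> p) then (- 1) ^ card {k\<in>S. k < j} else 0)"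
      for r'
      using Dl_deg1[OF b[unfolded b_eq] j, of "(r', S)" p] \<open>j \<notin> S\<close>
      unfolding fst_conv snd_conv smaller by simp
    show ?thesis
      using b_eq \<open>j \<notin> S\<close> by (simp add: Dl_b kalg_zero[OF alg])
  next
    case False
    obtain q B where b_eq: "b = (q, B)"
      by fastforce
    have "\<not> ((r, S) = (\<not> q, B - {j}) \<and> p = q \<and> j \<in> B)"
      using False b_eq by (auto simp: insert_Diff)
    then have "Dl n b (r, S) (p, {j}) = (0::'k)"
      unfolding b_eq Dl_deg1[OF b[unfolded b_eq] j] fst_conv snd_conv by (rule if_not_P)
    then show ?thesis
      using False kalg_zero[OF alg] by auto
  qed
  have "id_delta n \<iota> t ((r, S), (p, {j})) = (\<Sum>b\<in>Idx n. if b = (p, insert j S)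
      then (if r = (\<not> p) \<and> j \<notin> S then \<iota> ((- 1) ^ card {k\<in>S. k < j}) * t b else 0) else 0)"
    unfolding id_delta_def prod.case by (rule sum.cong[OF refl summand])
  then show ?thesis
    using j by (simp add: Idx_def)
qed

lemma ttmul_eq_sum:
  "ttmul n \<iota> U V (c, d) = (\<Sum>b1\<in>Idx n. \<Sum>d1\<in>Idx n. \<Sum>b2\<in>Idx n. \<Sum>d2\<in>Idx n.
      \<iota> (bmul b1 d1 c * bmul b2 d2 d) * U (b1, b2) * V (d1, d2))"
proof -
  have "ttmul n \<iota> U V (c, d) = (\<Sum>b1\<in>Idx n. \<Sum>b2\<in>Idx n. \<Sum>d1\<in>Idx n. \<Sum>d2\<in>Idx n.
      \<iota> (bmul b1 d1 c * bmul b2 d2 d) * U (b1, b2) * V (d1, d2))"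
    by (simp add: ttmul_def)
  also have "\<dots> = (\<Sum>b1\<in>Idx n. \<Sum>d1\<in>Idx n. \<Sum>b2\<in>Idx n. \<Sum>d2\<in>Idx n.
      \<iota> (bmul b1 d1 c * bmul b2 d2 d) * U (b1, b2) * V (d1, d2))"
    by (rule sum.cong[OF refl], rule sum.swap)
  finally show ?thesis .
qed

lemma ttmul_tens_one_left:
  fixes \<iota> :: "'k::field \<Rightarrow> 'a::ring_1"
  assumes alg: "kalg \<iota>" and d: "d \<in> Idx n"
  shows "ttmul n \<iota> (tens_one e) X (c, d) = tmul n \<iota> e (\<lambda>d1. X (d1, d)) c"
proof -
  have "(\<Sum>b2\<in>Idx n. \<Sum>d2\<in>Idx n. \<iota> (bmul b1 d1 c * bmul b2 d2 d) * tens_one e (b1, b2) * X (d1, d2))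
      = (\<Sum>b2\<in>Idx n. \<Sum>d2\<in>Idx n. if b2 = (False, {}) \<and> d2 = d then \<iota> (bmul b1 d1 c) * e b1 * X (d1, d2) else 0)"
    for b1 d1
    by (intro sum.cong refl) (auto simp: tens_one_def bmul_one_left kalg_zero[OF alg])
  then show ?thesis
    using d by (simp add: ttmul_eq_sum tmul_def sum_sum_delta subset_Idx)
qed

lemma ttmul_tens_one_right:
  fixes \<iota> :: "'k::field \<Rightarrow> 'a::ring_1"
  assumes alg: "kalg \<iota>" and d: "d \<in> Idx n"
  shows "ttmul n \<iota> X (tens_one e) (c, d) = tmul n \<iota> (\<lambda>b1. X (b1, d)) e c"
proof -
  have "(\<Sum>b2\<in>Idx n. \<Sum>d2\<in>Idx n. \<iota> (bmul b1 d1 c * bmul b2 d2 d) * X (b1, b2) * tens_one e (d1, d2))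
      = (\<Sum>b2\<in>Idx n. \<Sum>d2\<in>Idx n. if b2 = d \<and> d2 = (False, {}) then \<iota> (bmul b1 d1 c) * X (b1, b2) * e d1 else 0)"
    for b1 d1
    by (intro sum.cong refl) (auto simp: tens_one_def bmul_one_right kalg_zero[OF alg])
  then show ?thesis
    using d by (simp add: ttmul_eq_sum tmul_def sum_sum_delta subset_Idx)
qed

lemma ttmul_outside:
  fixes \<iota> :: "'k::field \<Rightarrow> 'a::ring_1"
  assumes alg: "kalg \<iota>" and d: "d \<notin> Idx n"
  shows "ttmul n \<iota> U V (c, d) = 0"
proof -
  have "bmul b2 d2 d = (0::'k)" if "b2 \<in> Idx n" "d2 \<in> Idx n" for b2 d2
    using that d by (cases b2, cases d2, cases d) (auto simp: Idx_def dest!: bmul_nonzeroD)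
  then show ?thesis
    unfolding ttmul_def using kalg_zero[OF alg] by simp
qed

subsection \<open>Elements of degree at most one\<close>

definition deg_le_1 :: "nat \<Rightarrow> (hidx \<Rightarrow> 'a::zero) \<Rightarrow> 'a \<Rightarrow> 'a \<Rightarrow> (nat \<Rightarrow> 'a) \<Rightarrow> (nat \<Rightarrow> 'a) \<Rightarrow> bool" where
  "deg_le_1 n t a0 a1 y z \<longleftrightarrow> t (False, {}) = a0 \<and> t (True, {}) = a1
     \<and> (\<forall>i\<in>{1..<n}. t (True, {i}) = y i \<and> t (False, {i}) = z i)
     \<and> (\<forall>p B. B \<noteq> {} \<and> (\<forall>i\<in>{1..<n}. B \<noteq> {i}) \<longrightarrow> t (p, B) = 0)"

lemma deg_le_1_unique:
  assumes "deg_le_1 n t a0 a1 y z" "deg_le_1 n u a0 a1 y z"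
  shows "t = u"
proof
  fix e :: hidx
  obtain p B where e: "e = (p, B)" by fastforce
  consider "B = {}" | i where "i \<in> {1..<n}" "B = {i}" | "B \<noteq> {}" "\<forall>i\<in>{1..<n}. B \<noteq> {i}"
    by blast
  then show "t e = u e"
    by cases (use assms e in \<open>cases p; auto simp: deg_le_1_def\<close>)+
qed

lemma deg_le_1_cong:
  assumes "deg_le_1 n t a0 a1 y z" "a0 = a0'" "a1 = a1'"
    "\<forall>i\<in>{1..<n}. y i = y' i" "\<forall>i\<in>{1..<n}. z i = z' i"
  shows "deg_le_1 n t a0' a1' y' z'"
  using assms unfolding deg_le_1_def by auto

lemma deg_le_1_zero: "deg_le_1 n (\<lambda>_. 0) 0 0 (\<lambda>_. 0) (\<lambda>_. 0)"
  unfolding deg_le_1_def by auto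

lemma deg_le_1_nonzeroD:
  assumes "deg_le_1 n t a0 a1 y (\<lambda>_. 0)" "t (q, R) \<noteq> 0"
  shows "R = {} \<or> (q \<and> (\<exists>i\<in>{1..<n}. R = {i}))"
proof (rule ccontr)
  assume "\<not> (R = {} \<or> (q \<and> (\<exists>i\<in>{1..<n}. R = {i})))"
  then consider i where "\<not> q" "i \<in> {1..<n}" "R = {i}" | "R \<noteq> {}" "\<forall>i\<in>{1..<n}. R \<noteq> {i}"
    by blast
  then show False
    by cases (use assms in \<open>auto simp: deg_le_1_def\<close>)
qed

lemma deg_le_1_mult_nonzero_high:
  assumes "deg_le_1 n t a0 a1 y (\<lambda>_. 0)" "deg_le_1 n u b0 b1 d (\<lambda>_. 0)"
    and "R \<subseteq> B" "B \<noteq> {}" "\<forall>i. B \<noteq> {i}" "t (q, R) \<noteq> 0" "u (q \<noteq> p, B - R) \<noteq> 0"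
  shows "p = False \<and> q \<and> (\<exists>i. R = {i}) \<and> (\<exists>j. B - R = {j})"
proof -
  have t_supp: "R = {} \<or> (q \<and> (\<exists>i\<in>{1..<n}. R = {i}))"
    using deg_le_1_nonzeroD[OF assms(1,6)] .
  have u_supp: "B - R = {} \<or> ((q \<noteq> p) \<and> (\<exists>i\<in>{1..<n}. B - R = {i}))"
    using deg_le_1_nonzeroD[OF assms(2,7)] .
  have "R \<noteq> {}"
    using u_supp assms(4,5) by auto
  then obtain i where "q" "R = {i}"
    using t_supp by auto
  moreover have "B - R \<noteq> {}"
    using assms(3,5) \<open>R = {i}\<close> by auto
  ultimately show ?thesis
    using u_supp by auto
qed

context half_algebra
begin

text \<open>Without \<open>x\<^sub>i\<close>-coordinates, the only contributions in degree two come from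
  \<open>g x\<^sub>i \<cdot> g x\<^sub>j\<close>; the summands for the splittings \<open>R\<close> and \<open>B - R\<close> cancel by
  anticommutativity and the symmetry hypothesis, so the coefficient is its own negative.\<close>
lemma tmul_deg_le_1_high:
  assumes ft: "deg_le_1 n t a0 a1 y (\<lambda>_. 0)" and fu: "deg_le_1 n u b0 b1 d (\<lambda>_. 0)"
    and sym: "\<forall>i\<in>{1..<n}. \<forall>j\<in>{1..<n}. y i * d j = y j * d i"
    and B: "B \<noteq> {}" "\<forall>i\<in>{1..<n}. B \<noteq> {i}"
  shows "tmul n \<iota> t u (p, B) = 0"
proof (cases "B \<subseteq> {1..<n}")
  case False
  then show ?thesis using tmul_outside[OF alg] by blast
next
  case Br: True
  define G where
    "G R = (\<Sum>q\<in>UNIV. \<iota> (bmul (q, R) (q \<noteq> p, B - R) (p, B)) * t (q, R) * u (q \<noteq> p, B - R))" for R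
  have not_single: "\<forall>i. B \<noteq> {i}"
    using B Br by auto
  define P where "P R \<longleftrightarrow> p = False \<and> (\<exists>i. R = {i}) \<and> (\<exists>j. B - R = {j})" for R
  have P_if_nonzero: "P R" if "R \<subseteq> B" "t (q, R) \<noteq> 0" "u (q \<noteq> p, B - R) \<noteq> 0" for R q
    using deg_le_1_mult_nonzero_high[OF ft fu that(1) B(1) not_single that(2,3)] unfolding P_def by blast
  have G_eq_0: "G R = 0" if "R \<subseteq> B" "\<not> P R" for R
    unfolding G_def using P_if_nonzero[OF that(1)] that(2)
    by (intro sum.neutral ballI) (metis mult_zero_left mult_zero_right)
  have G_complement: "G (B - R) = - G R" if R: "R \<subseteq> B" for R
  proof (cases "P R")
    case True
    then obtain i j where pF: "p = False" and i: "R = {i}" and j: "B - R = {j}"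
      unfolding P_def by blast
    have ij: "i \<noteq> j" and ir: "i \<in> {1..<n}" and jr: "j \<in> {1..<n}"
      using i j R Br by auto
    have "B - {i} = {j}" "B - {j} = {i}"
      using R i j by auto
    then have "G R = \<iota> (bmul (True, {i}) (True, {j}) (False, B)) * (y i * d j)"
      and "G (B - R) = \<iota> (bmul (True, {j}) (True, {i}) (False, B)) * (y j * d i)"
      using ft fu ir jr kalg_zero[OF alg]
      by (simp_all add: G_def UNIV_bool pF i j deg_le_1_def mult.assoc)
    then show ?thesis
      using sym ir jr by (simp add: bmul_gx_anticommute[OF ij[symmetric]] kalg_minus[OF alg])
  next
    case False
    moreover have "P (B - R) = P R"
      using R double_diff[OF R order.refl] unfolding P_def by auto
    ultimately show ?thesis
      using G_eq_0[OF R] G_eq_0[of "B - R"] by auto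
  qed
  have "sum G (Pow B) = sum (\<lambda>R. G (B - R)) (Pow B)"
    by (rule sum.reindex_bij_witness[of _ "\<lambda>R. B - R" "\<lambda>R. B - R"]) (auto simp: double_diff)
  also have "\<dots> = - sum G (Pow B)"
    by (simp add: G_complement sum_negf)
  finally have "sum G (Pow B) = 0"
    using double_eq_0_iff by (simp add: eq_neg_iff_add_eq_0)
  then show ?thesis
    by (simp add: tmul_eq_sum_Pow[OF alg Br] G_def)
qed

lemmas tmul_simps = tmul_eq_sum_Pow[OF alg] Pow_insert UNIV_bool bmul_one_left bmul_g_left bmul_one_right
  bmul_g_right kalg_one[OF alg] kalg_zero[OF alg] kalg_minus[OF alg]

lemma tmul_deg_le_1:
  assumes ft: "deg_le_1 n t a0 a1 y (\<lambda>_. 0)" and fu: "deg_le_1 n u b0 b1 d (\<lambda>_. 0)"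
    and sym: "\<forall>i\<in>{1..<n}. \<forall>j\<in>{1..<n}. y i * d j = y j * d i"
  shows "deg_le_1 n (tmul n \<iota> t u) (a0 * b0 + a1 * b1) (a0 * b1 + a1 * b0)
           (\<lambda>i. a0 * d i + y i * b0) (\<lambda>i. a1 * d i - y i * b1)"
proof -
  have coords: "t (False, {}) = a0" "t (True, {}) = a1" "u (False, {}) = b0" "u (True, {}) = b1"
    using ft fu by (auto simp: deg_le_1_def)
  have coords1: "t (True, {i}) = y i" "t (False, {i}) = 0" "u (True, {i}) = d i" "u (False, {i}) = 0"
    if "i \<in> {1..<n}" for i
    using ft fu that by (auto simp: deg_le_1_def)
  have "tmul n \<iota> t u (False, {}) = a0 * b0 + a1 * b1" "tmul n \<iota> t u (True, {}) = a0 * b1 + a1 * b0"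
    by (simp_all add: tmul_simps coords)
  moreover have "tmul n \<iota> t u (True, {i}) = a0 * d i + y i * b0"
    and "tmul n \<iota> t u (False, {i}) = a1 * d i - y i * b1" if "i \<in> {1..<n}" for i
    using that by (simp_all add: tmul_simps coords coords1 insert_commute)
  ultimately show ?thesis
    using tmul_deg_le_1_high[OF ft fu sym] unfolding deg_le_1_def by blast
qed

end

subsection \<open>Coactions given by the formula\<close>

definition coaction_formula :: "('k::field \<Rightarrow> 'a::ring_1) \<Rightarrow> nat \<Rightarrow> (nat \<Rightarrow> 'a) \<Rightarrow> 'a \<Rightarrow> hidx \<Rightarrow> 'a" where
  "coaction_formula \<iota> n w a = (\<lambda>e. tens (\<iota> (1/2) * a) (False, {}) e + tens (\<iota> (1/2) * a) (True, {}) e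
                         - (\<Sum>i\<in>{1..<n}. tens (w i * a) (True, {i}) e))"

lemma sum_tens_gx: "(\<Sum>i\<in>I. tens (f i) (True, {i}) e) = (\<Sum>i\<in>I. if e = (True, {i}) then f i else 0)"
  by (simp add: tens_def eq_commute)

lemma deg_le_1_coaction_formula:
  "deg_le_1 n (coaction_formula \<iota> n w a) (\<iota> (1/2) * a) (\<iota> (1/2) * a) (\<lambda>i. - (w i * a)) (\<lambda>_. 0)"
  unfolding deg_le_1_def coaction_formula_def sum_tens_gx by (auto simp: tens_def sum.neutral)

lemma counit_sum:
  fixes \<iota> :: "'k::field \<Rightarrow> 'a::ring_1"
  assumes alg: "kalg \<iota>"
  shows "(\<Sum>b\<in>Idx n. \<iota> (heps b) * t b) = t (False, {}) + t (True, {})"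
proof -
  have "(\<Sum>b\<in>Idx n. \<iota> (heps b) * t b) = (\<Sum>b\<in>{(False, {}), (True, {})}. \<iota> (heps b) * t b)"
    by (rule sum.mono_neutral_right) (auto simp: Idx_def heps_def kalg_zero[OF alg])
  then show ?thesis
    by (simp add: heps_def kalg_one[OF alg])
qed

locale coaction_by_formula = half_algebra \<iota> for \<iota> :: "'k::field \<Rightarrow> 'a::ring_1" +
  fixes \<rho> :: "'a \<Rightarrow> hidx \<Rightarrow> 'a" and n :: nat and w :: "nat \<Rightarrow> 'a"
  assumes rho_eq: "\<rho> a = coaction_formula \<iota> n w a"
    and w_central: "i \<in> {1..<n} \<Longrightarrow> c * w i = w i * c"
begin

lemma w_left_commute: "i \<in> {1..<n} \<Longrightarrow> x * (w i * y) = w i * (x * y)"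
  by (rule central_left_commute[OF w_central])

lemma w_mult_w_symmetric:
  assumes "i \<in> {1..<n}" "j \<in> {1..<n}"
  shows "- (w i * a) * - (w j * b) = - (w j * a) * - (w i * b)"
proof -
  have expand: "- (w k * a) * - (w l * b) = w k * (w l * (a * b))" if "l \<in> {1..<n}" for k l
    using that by (simp only: minus_mult_minus mult.assoc w_left_commute[of l a b])
  have "- (w i * a) * - (w j * b) = w i * (w j * (a * b))"
    using expand[OF assms(2)] .
  also have "\<dots> = w j * (w i * (a * b))"
    using w_left_commute[OF assms(1), of "w j"] by simp
  also have "\<dots> = - (w j * a) * - (w i * b)"
    using expand[OF assms(1)] by simp
  finally show ?thesis .
qed

lemma deg_le_1_rho: "deg_le_1 n (\<rho> a) (half * a) (half * a) (\<lambda>i. - (w i * a)) (\<lambda>_. 0)"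
  unfolding rho_eq by (rule deg_le_1_coaction_formula)

lemma rho_eqI: "deg_le_1 n t (half * a) (half * a) (\<lambda>i. - (w i * a)) (\<lambda>_. 0) \<Longrightarrow> \<rho> a = t"
  using deg_le_1_unique[OF deg_le_1_rho] .

lemma rho_deg0: "\<rho> a (False, {}) = half * a" "\<rho> a (True, {}) = half * a"
  and rho_deg1: "i \<in> {1..<n} \<Longrightarrow> \<rho> a (False, {i}) = 0" "i \<in> {1..<n} \<Longrightarrow> \<rho> a (True, {i}) = - (w i * a)"
  and rho_high: "B \<noteq> {} \<Longrightarrow> \<forall>i\<in>{1..<n}. B \<noteq> {i} \<Longrightarrow> \<rho> a (p, B) = 0"
  using deg_le_1_rho[of a] unfolding deg_le_1_def by auto

lemma rho_counit: "(\<Sum>b\<in>Idx n. \<iota> (heps b) * \<rho> a b) = a"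
  by (simp add: counit_sum[OF alg] rho_deg0 half_double)

lemma rho_mult: "\<rho> (a * b) = tmul n \<iota> (\<rho> a) (\<rho> b)"
proof (rule rho_eqI, rule deg_le_1_cong[OF tmul_deg_le_1[OF deg_le_1_rho deg_le_1_rho]])
  have "half * a * (half * b) = half * (half * (a * b))"
    by (simp only: mult.assoc half_left_commute[of a])
  then show "half * a * (half * b) + half * a * (half * b) = half * (a * b)"
    and "half * a * (half * b) + half * a * (half * b) = half * (a * b)"
    by (simp_all only: half_double)
  have half_w: "half * a * - (w i * b) = - (half * (w i * (a * b)))"
    and w_half: "- (w i * a) * (half * b) = - (half * (w i * (a * b)))" if "i \<in> {1..<n}" for i
    using that by (simp_all only: mult.assoc w_left_commute[of i a] half_left_commute mult_minus_right
        mult_minus_left)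
  show "\<forall>i\<in>{1..<n}. half * a * - (w i * b) + - (w i * a) * (half * b) = - (w i * (a * b))"
  proof
    fix i assume i: "i \<in> {1..<n}"
    have "- (half * (w i * (a * b))) + - (half * (w i * (a * b))) = - (w i * (a * b))"
      by (simp only: minus_add_distrib[symmetric] half_double)
    then show "half * a * - (w i * b) + - (w i * a) * (half * b) = - (w i * (a * b))"
      by (simp only: half_w[OF i] w_half[OF i])
  qed
  show "\<forall>i\<in>{1..<n}. half * a * - (w i * b) - - (w i * a) * (half * b) = 0"
  proof
    fix i assume i: "i \<in> {1..<n}"
    show "half * a * - (w i * b) - - (w i * a) * (half * b) = 0"
      by (simp only: half_w[OF i] w_half[OF i] diff_self)
  qed
  show "\<forall>i\<in>{1..<n}. \<forall>j\<in>{1..<n}. - (w i * a) * - (w j * b) = - (w j * a) * - (w i * b)"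
    using w_mult_w_symmetric by blast
qed

text \<open>Coassociativity is checked slice by slice along the last tensor factor: by
  \<open>id_delta_rho_slice\<close> every slice of \<open>(I \<otimes> \<Delta>) \<rho>(a)\<close> has the shape of \<open>X\<close> below.\<close>
lemma rho_one_mult_slice:
  assumes X: "deg_le_1 n X c0 (half * c) (\<lambda>i. - (w i * c)) (\<lambda>_. 0)"
  shows "tmul n \<iota> (\<rho> 1) X = \<rho> (c0 + half * c)" and "tmul n \<iota> X (\<rho> 1) = \<rho> (c0 + half * c)"
proof -
  have sym_left: "\<forall>i\<in>{1..<n}. \<forall>j\<in>{1..<n}. - (w i * 1) * - (w j * c) = - (w j * 1) * - (w i * c)"
    and sym_right: "\<forall>i\<in>{1..<n}. \<forall>j\<in>{1..<n}. - (w i * c) * - (w j * 1) = - (w j * c) * - (w i * 1)"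
    using w_mult_w_symmetric by blast+
  show "tmul n \<iota> (\<rho> 1) X = \<rho> (c0 + half * c)"
  proof (rule rho_eqI[symmetric], rule deg_le_1_cong[OF tmul_deg_le_1[OF deg_le_1_rho X sym_left]])
    show "half * 1 * c0 + half * 1 * (half * c) = half * (c0 + half * c)"
      and "half * 1 * (half * c) + half * 1 * c0 = half * (c0 + half * c)"
      by (simp_all add: distrib_left add.commute)
    show "\<forall>i\<in>{1..<n}. half * 1 * - (w i * c) + - (w i * 1) * c0 = - (w i * (c0 + half * c))"
      and "\<forall>i\<in>{1..<n}. half * 1 * - (w i * c) - - (w i * 1) * (half * c) = 0"
      by (simp_all add: distrib_left half_left_commute[of "w _" c] add.commute)
  qed
  show "tmul n \<iota> X (\<rho> 1) = \<rho> (c0 + half * c)"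
  proof (rule rho_eqI[symmetric], rule deg_le_1_cong[OF tmul_deg_le_1[OF X deg_le_1_rho sym_right]])
    show "c0 * (half * 1) + half * c * (half * 1) = half * (c0 + half * c)"
      and "c0 * (half * 1) + half * c * (half * 1) = half * (c0 + half * c)"
      by (simp_all add: distrib_left mult.assoc half_central[of c0] half_central[of c])
    show "\<forall>i\<in>{1..<n}. c0 * - (w i * 1) + - (w i * c) * (half * 1) = - (w i * (c0 + half * c))"
      by (simp add: distrib_left mult.assoc w_central[of _ c0] half_central[of c])
    show "\<forall>i\<in>{1..<n}. half * c * - (w i * 1) - - (w i * c) * (half * 1) = 0"
      by (simp add: mult.assoc w_central[of _ c] half_central[of c] half_left_commute[of "w _" c])
  qed
qed

lemma id_delta_rho_one:
  "deg_le_1 n (\<lambda>d1. id_delta n \<iota> (\<rho> a) (d1, (False, {}))) (half * a) 0 (\<lambda>_. 0) (\<lambda>_. 0)"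
  unfolding deg_le_1_def
  by (auto simp: id_delta_deg0[OF alg] rho_deg0 rho_deg1 rho_high subset_Idx)

lemma id_delta_rho_g:
  "deg_le_1 n (\<lambda>d1. id_delta n \<iota> (\<rho> a) (d1, (True, {}))) 0 (half * a) (\<lambda>i. - (w i * a)) (\<lambda>_. 0)"
  unfolding deg_le_1_def
  by (auto simp: id_delta_deg0[OF alg] rho_deg0 rho_deg1 rho_high subset_Idx)

lemma id_delta_rho_x:
  assumes j: "j \<in> {1..<n}"
  shows "deg_le_1 n (\<lambda>d1. id_delta n \<iota> (\<rho> a) (d1, (False, {j}))) 0 0 (\<lambda>_. 0) (\<lambda>_. 0)"
proof -
  have "\<rho> a (False, insert j S) = 0" for S
  proof (cases "S \<subseteq> {j}")
    case True
    then have "insert j S = {j}" by auto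
    then show ?thesis using rho_deg1(1)[OF j] by (simp only:)
  next
    case False
    then show ?thesis by (intro rho_high) auto
  qed
  then have "(\<lambda>d1. id_delta n \<iota> (\<rho> a) (d1, (False, {j}))) = (\<lambda>_. 0)"
    by (auto simp: id_delta_deg1[OF alg j])
  then show ?thesis
    using deg_le_1_zero by simp
qed

lemma id_delta_rho_gx:
  assumes j: "j \<in> {1..<n}"
  shows "deg_le_1 n (\<lambda>d1. id_delta n \<iota> (\<rho> a) (d1, (True, {j}))) (- (w j * a)) 0 (\<lambda>_. 0) (\<lambda>_. 0)"
proof -
  have "\<rho> a (True, insert j S) = 0" if "j \<notin> S" "S \<noteq> {}" for S
    using that by (intro rho_high) auto
  moreover have "\<rho> a (True, {i, j}) = 0" if "i \<noteq> j" for i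
    using that by (intro rho_high) auto
  ultimately show ?thesis
    unfolding deg_le_1_def using j
    by (auto simp: id_delta_deg1[OF alg j] rho_deg1 kalg_one[OF alg] insert_commute)
qed

lemma id_delta_rho_high:
  assumes B: "B \<noteq> {}" "\<forall>i\<in>{1..<n}. B \<noteq> {i}"
  shows "deg_le_1 n (\<lambda>d1. id_delta n \<iota> (\<rho> a) (d1, (p, B))) 0 0 (\<lambda>_. 0) (\<lambda>_. 0)"
proof -
  have Dl_zero: "Dl n b d1 (p, B) = (0::'k)" if "\<rho> a b \<noteq> 0" for b d1
  proof -
    obtain q R where b: "b = (q, R)" by fastforce
    from deg_le_1_nonzeroD[OF deg_le_1_rho] that b
    consider "R = {}" | i where "q" "i \<in> {1..<n}" "R = {i}"
      by blast
    then show ?thesis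
    proof cases
      case 1
      then show ?thesis using b Dl_deg0_high[OF B(1)] by simp
    next
      case (2 i)
      then show ?thesis using b B by (simp add: Dl_gx_high)
    qed
  qed
  have "\<iota> (Dl n b d1 (p, B)) * \<rho> a b = 0" for b d1
    using Dl_zero[of b d1] kalg_zero[OF alg] by (cases "\<rho> a b = 0") auto
  then have "(\<lambda>d1. id_delta n \<iota> (\<rho> a) (d1, (p, B))) = (\<lambda>_. 0)"
    by (intro ext) (simp add: id_delta_def)
  then show ?thesis
    using deg_le_1_zero by simp
qed

lemma id_delta_rho_slice:
  assumes "d \<in> Idx n"
  obtains c0 c where "deg_le_1 n (\<lambda>d1. id_delta n \<iota> (\<rho> a) (d1, d)) c0 (half * c) (\<lambda>i. - (w i * c)) (\<lambda>_. 0)"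
    and "\<rho> a d = c0 + half * c"
proof -
  obtain p B where d: "d = (p, B)" by fastforce
  consider "B = {}" | j where "j \<in> {1..<n}" "B = {j}" | "B \<noteq> {}" "\<forall>i\<in>{1..<n}. B \<noteq> {i}"
    by blast
  then show ?thesis
  proof cases
    case 1
    show ?thesis
    proof (cases p)
      case True
      show ?thesis
        by (rule that[of 0 a]) (use id_delta_rho_g[of a] in \<open>simp_all add: d 1 True rho_deg0\<close>)
    next
      case False
      show ?thesis
        by (rule that[of "half * a" 0]) (use id_delta_rho_one[of a] in \<open>simp_all add: d 1 False rho_deg0\<close>)
    qed
  next
    case (2 j)
    show ?thesis
    proof (cases p)
      case True
      show ?thesis
        by (rule that[of "- (w j * a)" 0])
          (use id_delta_rho_gx[OF 2(1), of a] in \<open>simp_all add: d 2 True rho_deg1[OF 2(1)]\<close>)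
    next
      case False
      show ?thesis
        by (rule that[of 0 0]) (use id_delta_rho_x[OF 2(1), of a] in \<open>simp_all add: d 2 False rho_deg1[OF 2(1)]\<close>)
    qed
  next
    case 3
    show ?thesis
      by (rule that[of 0 0]) (use id_delta_rho_high[OF 3, of a p] in \<open>simp_all add: d 3 rho_high\<close>)
  qed
qed

lemma rho_coassoc_slice:
  assumes "d \<in> Idx n"
  shows "\<rho> (\<rho> a d) = tmul n \<iota> (\<rho> 1) (\<lambda>d1. id_delta n \<iota> (\<rho> a) (d1, d))"
    and "\<rho> (\<rho> a d) = tmul n \<iota> (\<lambda>d1. id_delta n \<iota> (\<rho> a) (d1, d)) (\<rho> 1)"
proof -
  obtain c0 c where X: "deg_le_1 n (\<lambda>d1. id_delta n \<iota> (\<rho> a) (d1, d)) c0 (half * c) (\<lambda>i. - (w i * c)) (\<lambda>_. 0)"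
    and "\<rho> a d = c0 + half * c"
    using id_delta_rho_slice[OF assms] .
  then show "\<rho> (\<rho> a d) = tmul n \<iota> (\<rho> 1) (\<lambda>d1. id_delta n \<iota> (\<rho> a) (d1, d))"
    and "\<rho> (\<rho> a d) = tmul n \<iota> (\<lambda>d1. id_delta n \<iota> (\<rho> a) (d1, d)) (\<rho> 1)"
    using rho_one_mult_slice[OF X] by simp_all
qed

theorem formula_symmetric_partial_coaction: "symmetric_partial_coaction n \<iota> \<rho>"
proof -
  have "rho_rho n \<rho> a = ttmul n \<iota> (tens_one (\<rho> 1)) (id_delta n \<iota> (\<rho> a))" for a
    by (auto simp: fun_eq_iff rho_rho_def ttmul_outside[OF alg] ttmul_tens_one_left[OF alg]
        rho_coassoc_slice(1))
  moreover have "rho_rho n \<rho> a = ttmul n \<iota> (id_delta n \<iota> (\<rho> a)) (tens_one (\<rho> 1))" for a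
    by (auto simp: fun_eq_iff rho_rho_def ttmul_outside[OF alg] ttmul_tens_one_right[OF alg]
        rho_coassoc_slice(2))
  ultimately show ?thesis
    unfolding symmetric_partial_coaction_def partial_coaction_def
    using rho_counit rho_mult by blast
qed

end

subsection \<open>Partial coactions are given by the formula\<close>

locale nichols_partial_coaction = half_algebra \<iota> for \<iota> :: "'k::field \<Rightarrow> 'a::ring_1" +
  fixes \<rho> :: "'a \<Rightarrow> hidx \<Rightarrow> 'a" and n :: nat
  assumes lin: "klinear \<iota> \<rho>"
    and supp: "\<forall>a b. b \<notin> Idx n \<longrightarrow> \<rho> a b = 0"
    and A1: "\<rho> 1 (False, {}) - \<rho> 1 (True, {}) = 0"
    and central: "\<forall>i\<in>{1..<n}. \<forall>c. wcoef \<rho> i * c = c * wcoef \<rho> i"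
    and coaction: "partial_coaction n \<iota> \<rho>"
begin

lemma rho_counit: "\<rho> a (False, {}) + \<rho> a (True, {}) = a"
  using coaction counit_sum[OF alg, where t = "\<rho> a" and n = n] unfolding partial_coaction_def by simp

lemma rho_mult: "\<rho> (a * b) = tmul n \<iota> (\<rho> a) (\<rho> b)"
  using coaction unfolding partial_coaction_def by blast

lemma rho_coassoc_slice:
  assumes d: "d \<in> Idx n"
  shows "\<rho> (\<rho> a d) = tmul n \<iota> (\<rho> 1) (\<lambda>d1. id_delta n \<iota> (\<rho> a) (d1, d))"
proof
  fix c
  have "\<rho> (\<rho> a d) c = rho_rho n \<rho> a (c, d)"
    using d by (simp add: rho_rho_def)
  also have "\<dots> = ttmul n \<iota> (tens_one (\<rho> 1)) (id_delta n \<iota> (\<rho> a)) (c, d)"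
    using coaction unfolding partial_coaction_def by simp
  also have "\<dots> = tmul n \<iota> (\<rho> 1) (\<lambda>d1. id_delta n \<iota> (\<rho> a) (d1, d)) c"
    by (rule ttmul_tens_one_left[OF alg d])
  finally show "\<rho> (\<rho> a d) c = tmul n \<iota> (\<rho> 1) (\<lambda>d1. id_delta n \<iota> (\<rho> a) (d1, d)) c" .
qed

lemma rho_zero: "\<rho> 0 = (\<lambda>_. 0)"
proof
  fix e
  have "\<rho> 0 e = \<rho> 0 e + \<rho> 0 e"
    using lin unfolding klinear_def by (metis add_0)
  then show "\<rho> 0 e = 0" by simp
qed

lemma rho_scalar: "\<rho> (\<iota> c * a) = (\<lambda>e. \<iota> c * \<rho> a e)"
  using lin unfolding klinear_def by blast

lemma rho_one_deg0: "\<rho> 1 (False, {}) = half" "\<rho> 1 (True, {}) = half"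
proof -
  have "\<rho> 1 (False, {}) + \<rho> 1 (False, {}) = 1"
    using rho_counit[of 1] A1 by simp
  then have "half * (\<rho> 1 (False, {}) + \<rho> 1 (False, {})) = half" by simp
  then show "\<rho> 1 (False, {}) = half"
    by (simp add: distrib_left half_double)
  then show "\<rho> 1 (True, {}) = half"
    using A1 by simp
qed

lemma rho_deg0: "\<rho> a (False, {}) = half * a" "\<rho> a (True, {}) = half * a"
proof -
  have unit: "\<rho> a = tmul n \<iota> (\<rho> 1) (\<rho> a)"
    using rho_mult[of 1 a] by simp
  have "\<rho> a (False, {}) = half * (\<rho> a (False, {}) + \<rho> a (True, {}))"
    by (subst unit) (simp add: tmul_simps rho_one_deg0 distrib_left)
  then show "\<rho> a (False, {}) = half * a"
    by (simp add: rho_counit)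
  have "\<rho> a (True, {}) = half * (\<rho> a (False, {}) + \<rho> a (True, {}))"
    by (subst unit) (simp add: tmul_simps rho_one_deg0 distrib_left add.commute)
  then show "\<rho> a (True, {}) = half * a"
    by (simp add: rho_counit)
qed

lemma rho_one_x: "i \<in> {1..<n} \<Longrightarrow> \<rho> 1 (False, {i}) = 0"
proof -
  assume i: "i \<in> {1..<n}"
  have "\<rho> (\<rho> 1 (False, {})) = (\<lambda>e. half * \<rho> 1 e)"
    using rho_scalar[of "1/2" 1] rho_one_deg0 by simp
  then have "half * \<rho> 1 (False, {i})
      = tmul n \<iota> (\<rho> 1) (\<lambda>d1. id_delta n \<iota> (\<rho> 1) (d1, (False, {}))) (False, {i})"
    using rho_coassoc_slice[of "(False, {})" 1] by (simp add: subset_Idx)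
  also have "\<dots> = half * \<rho> 1 (False, {i}) + \<rho> 1 (False, {i}) * half"
    using i by (simp add: tmul_simps id_delta_deg0[OF alg] subset_Idx rho_one_deg0)
  finally have "half * \<rho> 1 (False, {i}) = 0"
    by (simp add: half_central)
  then show ?thesis
    by (simp add: half_mult_eq_0_iff)
qed

lemma rho_one_gx: "i \<in> {1..<n} \<Longrightarrow> \<rho> 1 (True, {i}) = - wcoef \<rho> i"
  using rho_one_x by (simp add: wcoef_def)

lemma rho_deg1:
  assumes i: "i \<in> {1..<n}"
  shows "\<rho> a (False, {i}) = 0" and "\<rho> a (True, {i}) = - (wcoef \<rho> i * a)"
proof -
  define x y where "x = \<rho> a (False, {i})" and "y = \<rho> a (True, {i})"
  let ?w = "wcoef \<rho> i"
  have w_central: "c * ?w = ?w * c" for c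
    using central i by simp
  have "\<rho> a (False, {i}) = tmul n \<iota> (\<rho> 1) (\<rho> a) (False, {i})"
    using rho_mult[of 1 a] by simp
  then have left: "x = half * (?w * a) + (half * x + half * y)"
    using i by (simp add: x_def y_def tmul_simps rho_one_deg0 rho_one_x rho_one_gx rho_deg0
        half_left_commute[of ?w])
  have "\<rho> a (False, {i}) = tmul n \<iota> (\<rho> a) (\<rho> 1) (False, {i})"
    using rho_mult[of a 1] by simp
  then have "x = x * half - y * half - half * a * ?w"
    using i by (simp add: x_def y_def tmul_simps rho_one_deg0 rho_one_x rho_one_gx rho_deg0)
  then have right: "x = half * x - half * y - half * (?w * a)"
    by (simp add: half_central[of x] half_central[of y] mult.assoc w_central[of a])
  have "x + x = (half * (?w * a) + (half * x + half * y)) + (half * x - half * y - half * (?w * a))"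
    using left right by (rule arg_cong2)
  also have "\<dots> = half * x + half * x"
    by (simp add: algebra_simps)
  finally have "x + x = half * x + half * x" .
  then show x0: "\<rho> a (False, {i}) = 0"
    by (simp add: half_double x_def)
  have "half * y = half * (- (?w * a))"
    using left x0 by (simp add: x_def eq_neg_iff_add_eq_0 add.commute)
  then show "\<rho> a (True, {i}) = - (?w * a)"
    by (metis half_double y_def)
qed

text \<open>Coassociativity on the slice at \<open>g\<^sup>p x\<^sub>j\<close>, read at \<open>g\<^sup>1\<^sup>-\<^sup>p x\<^sub>S\<^sub>0\<close>: the
  coordinate \<open>\<iota>(1/2)\<close> of \<open>\<rho>(1)\<close> at \<open>1\<close> contributes \<open>\<plusminus>\<iota>(1/2)\<close> times the wanted
  coordinate of \<open>\<rho>(a)\<close>, and everything else is one of the products in \<open>lower\<close>.\<close>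
lemma rho_insert_vanish:
  assumes j: "j \<in> {1..<n}" and S0: "S0 \<subseteq> {1..<n}" "j \<notin> S0"
    and slice_zero: "\<rho> (\<rho> a (p, {j})) (\<not> p, S0) = 0"
    and lower: "\<And>R. R \<subseteq> S0 \<Longrightarrow> R \<noteq> {} \<Longrightarrow> \<rho> 1 (False, R) = 0 \<or> \<rho> a (p, insert j (S0 - R)) = 0"
  shows "\<rho> a (p, insert j S0) = 0"
proof -
  define Y where "Y = (\<lambda>d1. id_delta n \<iota> (\<rho> a) (d1, (p, {j})))"
  have Y: "Y (r, S) = (if r = (\<not> p) \<and> j \<notin> S \<and> S \<subseteq> {1..<n}
      then \<iota> ((- 1) ^ card {k\<in>S. k < j}) * \<rho> a (p, insert j S) else 0)" for r S
    unfolding Y_def by (rule id_delta_deg1[OF alg j])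
  define G where "G R = (\<Sum>q\<in>UNIV. \<iota> (bmul (q, R) (q \<noteq> (\<not> p), S0 - R) (\<not> p, S0))
      * \<rho> 1 (q, R) * Y (q \<noteq> (\<not> p), S0 - R))" for R
  have "finite S0"
    using S0(1) by (rule finite_subset) simp
  have "0 = tmul n \<iota> (\<rho> 1) Y (\<not> p, S0)"
    using slice_zero rho_coassoc_slice[of "(p, {j})" a] j by (simp add: Y_def subset_Idx)
  also have "\<dots> = G {} + sum G (Pow S0 - {{}})"
    using \<open>finite S0\<close> by (simp add: tmul_eq_sum_Pow[OF alg S0(1)] G_def sum.remove[of _ "{}"])
  also have "sum G (Pow S0 - {{}}) = 0"
  proof (rule sum.neutral, rule ballI)
    fix R assume "R \<in> Pow S0 - {{}}"
    then show "G R = 0"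
      using lower[of R] S0 by (auto simp: G_def UNIV_bool Y)
  qed
  also have "G {} = half * (\<iota> ((- 1) ^ card {k\<in>S0. k < j}) * \<rho> a (p, insert j S0))"
    using S0 by (simp add: G_def UNIV_bool Y bmul_one_left kalg_one[OF alg] rho_one_deg0)
  finally have "(- 1) ^ card {k\<in>S0. k < j} * \<rho> a (p, insert j S0) = 0"
    by (simp add: half_mult_eq_0_iff kalg_minus_one_power[OF alg])
  then show ?thesis
    by (simp add: minus_one_power_iff split: if_splits)
qed

lemma rho_x_vanish: "B \<subseteq> {1..<n} \<Longrightarrow> B \<noteq> {} \<Longrightarrow> \<rho> a (False, B) = 0"
proof (induction "card B" arbitrary: B a rule: less_induct)
  case less
  obtain j where j: "j \<in> B"
    using less.prems(2) by blast
  define S0 where "S0 = B - {j}"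
  have B: "B = insert j S0" and jr: "j \<in> {1..<n}" and S0: "S0 \<subseteq> {1..<n}" "j \<notin> S0"
    using j less.prems(1) by (auto simp: S0_def)
  have "finite B"
    using less.prems(1) by (rule finite_subset) simp
  show ?case
  proof (cases "S0 = {}")
    case True
    then show ?thesis using B rho_deg1(1)[OF jr] by simp
  next
    case False
    have "\<rho> a (False, insert j (S0 - R)) = 0" if "R \<subseteq> S0" "R \<noteq> {}" for R
    proof (rule less.hyps)
      show "card (insert j (S0 - R)) < card B"
        using that \<open>finite B\<close> B S0(2) by (auto intro!: psubset_card_mono)
    qed (use S0 jr in auto)
    then show ?thesis
      unfolding B using jr S0
      by (intro rho_insert_vanish) (auto simp: rho_deg1(1)[OF jr] rho_zero)
  qed
qed

lemma rho_gx_vanish: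
  assumes "B \<subseteq> {1..<n}" "B \<noteq> {}" "\<forall>i. B \<noteq> {i}"
  shows "\<rho> a (True, B) = 0"
proof -
  obtain j where j: "j \<in> B"
    using assms(2) by blast
  define S0 where "S0 = B - {j}"
  have B: "B = insert j S0" and jr: "j \<in> {1..<n}" and S0: "S0 \<subseteq> {1..<n}" "j \<notin> S0" "S0 \<noteq> {}"
    using j assms by (auto simp: S0_def)
  have "\<rho> (\<rho> a (True, {j})) (False, S0) = 0"
    using rho_deg1(2)[OF jr] rho_x_vanish[OF S0(1,3)] by simp
  then show ?thesis
    unfolding B using jr S0 rho_x_vanish by (intro rho_insert_vanish) auto
qed

theorem rho_eq_coaction_formula: "\<rho> a = coaction_formula \<iota> n (wcoef \<rho>) a"
proof (rule deg_le_1_unique[OF _ deg_le_1_coaction_formula])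
  show "deg_le_1 n (\<rho> a) (half * a) (half * a) (\<lambda>i. - (wcoef \<rho> i * a)) (\<lambda>_. 0)"
    unfolding deg_le_1_def
  proof (intro conjI ballI allI impI)
    fix p B assume B: "B \<noteq> {} \<and> (\<forall>i\<in>{1..<n}. B \<noteq> {i})"
    show "\<rho> a (p, B) = 0"
    proof (cases "B \<subseteq> {1..<n}")
      case True
      moreover from True B have "B \<noteq> {}" "\<forall>i. B \<noteq> {i}" by auto
      ultimately show ?thesis
        using rho_x_vanish rho_gx_vanish by (cases p) simp_all
    qed (use supp in \<open>auto simp: Idx_def\<close>)
  qed (simp_all add: rho_deg0 rho_deg1)
qed

end

theorem theorem4p9:
  fixes \<iota> :: "'k::field \<Rightarrow> 'a::ring_1" and \<rho> :: "'a \<Rightarrow> hidx \<Rightarrow> 'a" and n :: nat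
  assumes char: "(2::'k) \<noteq> 0"
    and n2: "n \<ge> 2"
    and alg: "kalg \<iota>"
    and lin: "klinear \<iota> \<rho>"
    and supp: "\<forall>a b. b \<notin> Idx n \<longrightarrow> \<rho> a b = 0"
    and A1: "\<rho> 1 (False, {}) - \<rho> 1 (True, {}) = 0"
    and central: "\<forall>i\<in>{1..<n}. \<forall>c. wcoef \<rho> i * c = c * wcoef \<rho> i"
  shows "(partial_coaction n \<iota> \<rho> \<longleftrightarrow>
           (\<forall>a. \<rho> a = (\<lambda>e. tens (\<iota> (1/2) * a) (False, {}) e + tens (\<iota> (1/2) * a) (True, {}) e
                         - (\<Sum>i\<in>{1..<n}. tens (wcoef \<rho> i * a) (True, {i}) e))))
       \<and> (partial_coaction n \<iota> \<rho> \<longrightarrow> symmetric_partial_coaction n \<iota> \<rho>)"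
proof -
  interpret half_algebra \<iota>
    using alg char by unfold_locales
  have "\<rho> a = coaction_formula \<iota> n (wcoef \<rho>) a" if "partial_coaction n \<iota> \<rho>" for a
  proof -
    interpret nichols_partial_coaction \<iota> \<rho> n
      using lin supp A1 central that by unfold_locales
    show ?thesis by (rule rho_eq_coaction_formula)
  qed
  moreover have "symmetric_partial_coaction n \<iota> \<rho>" if "\<forall>a. \<rho> a = coaction_formula \<iota> n (wcoef \<rho>) a"
  proof -
    interpret coaction_by_formula \<iota> \<rho> n "wcoef \<rho>"
      using that central by unfold_locales simp_all
    show ?thesis by (rule formula_symmetric_partial_coaction)
  qed
  ultimately show ?thesis
    unfolding coaction_formula_def symmetric_partial_coaction_def by blast
qed

end
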